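(* Let $(S,g_1^0,g_2^0,g_3^0,D_1,D_2,D_3,\xi)\in\mathrm{MC}_{\mathrm{pre}}$ satisfy $g_1^0>0$, $g_2^0<0$, $g_3^0<0$ and $c_{23}^1\neq0$ everywhere on $S$. Then there exist unique $A,B\in C^\infty(S,\mathbb{R})$ with $A,B>0$ and a unique $\sigma\in\{-1,+1\}$ such that the transformed tuple $$\big(S,\,Ag_1^0,\,Ag_2^0,\,Ag_3^0,\,\sigma AB^{g_2^0+g_3^0}D_1,\,\sigma AB^{g_3^0+g_1^0}D_2,\,\sigma AB^{g_1^0+g_2^0}D_3,\,\xi+\log A+(g_1^0+g_2^0+g_3^0)\log B\big)$$ lies in $\mathrm{MC}_{\mathrm{normal}}$. (The resulting partial map $\mathcal{N}:\mathrm{MC}_{\mathrm{pre}}\nrightarrow\mathrm{MC}_{\mathrm{normal}}$ is called normalization.)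
   Context: "Cyclic $(i,j,k)$" means $(i,j,k)\in\{(1,2,3),(2,3,1),(3,1,2)\}$. Let $S$ be a smooth manifold diffeomorphic to $\mathbb{R}^3$ and $D_1,D_2,D_3$ a frame of vector fields on $S$; its structure functions $c_{jk}^i\in C^\infty(S,\mathbb{R})$ are defined by $[D_j,D_k]=\sum_{i=1}^3c_{jk}^iD_i$. $\mathrm{MC}_{\mathrm{pre}}$ is the set of tuples $(S,g_1^0,g_2^0,g_3^0,D_1,D_2,D_3,\xi)$ with $g_i^0,\xi\in C^\infty(S,\mathbb{R})$ satisfying (E1) $0=g_2^0g_3^0+g_3^0g_1^0+g_1^0g_2^0$, and (E2) $0=D_i(g_j^0+g_k^0)+c_{ij}^j(g_i^0-g_j^0)+c_{ik}^k(g_i^0-g_k^0)-2D_i(\xi)g_i^0$ for all cyclic $(i,j,k)$. $\mathrm{MC}_{\mathrm{normal}}\subset\mathrm{MC}_{\mathrm{pre}}$ consists of the tuples with $(g_1^0,g_2^0,g_3^0)=\tfrac12(1,-1-u,-1-\tfrac1u)$ for some $u\in C^\infty(S,\mathbb{R})$ with $u>0$, and with $c_{23}^1=-2$. Here $B^f$ means $e^{f\log B}$. *)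

theory Defs
  imports "HOL-Analysis.Analysis"
begin

text \<open>The manifold S (diffeomorphic to R^3) is modelled as R^3 itself, type real^3.
  Families indexed by i in {1,2,3} are functions on nat; only indices 1,2,3 matter.\<close>

type_synonym pt = "real^3"

primrec Ck :: "nat \<Rightarrow> (pt \<Rightarrow> real) \<Rightarrow> bool" where
  "Ck 0 f = continuous_on UNIV f"
| "Ck (Suc k) f = ((\<forall>x. f differentiable (at x)) \<and>
      (\<forall>i. Ck k (\<lambda>x. frechet_derivative f (at x) (axis i 1))))"

definition smooth :: "(pt \<Rightarrow> real) \<Rightarrow> bool" where
  "smooth f \<longleftrightarrow> (\<forall>k. Ck k f)"

definition smooth_vf :: "(pt \<Rightarrow> pt) \<Rightarrow> bool" where
  "smooth_vf V \<longleftrightarrow> (\<forall>i. smooth (\<lambda>x. V x $ i))"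

definition vf_apply :: "(pt \<Rightarrow> pt) \<Rightarrow> (pt \<Rightarrow> real) \<Rightarrow> pt \<Rightarrow> real" where
  "vf_apply V f x = frechet_derivative f (at x) (V x)"

definition lie_bracket :: "(pt \<Rightarrow> pt) \<Rightarrow> (pt \<Rightarrow> pt) \<Rightarrow> pt \<Rightarrow> pt" where
  "lie_bracket V W x = frechet_derivative W (at x) (V x) - frechet_derivative V (at x) (W x)"

definition is_frame :: "(nat \<Rightarrow> pt \<Rightarrow> pt) \<Rightarrow> bool" where
  "is_frame D \<longleftrightarrow> (\<forall>i\<in>{1,2,3}. smooth_vf (D i)) \<and>
     (\<forall>x a. (\<Sum>l\<in>{1,2,3}. a l *\<^sub>R D l x) = 0 \<longrightarrow> (\<forall>l\<in>{1,2,3}. a l = 0))"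

definition frame_coord :: "(nat \<Rightarrow> pt \<Rightarrow> pt) \<Rightarrow> pt \<Rightarrow> pt \<Rightarrow> nat \<Rightarrow> real" where
  "frame_coord D v x i = (THE c. \<exists>a. v = (\<Sum>l\<in>{1,2,3}. a l *\<^sub>R D l x) \<and> c = a i)"

text \<open>Structure functions: [D_j,D_k] = sum_i c_jk^i D_i.\<close>
definition struct_fun :: "(nat \<Rightarrow> pt \<Rightarrow> pt) \<Rightarrow> nat \<Rightarrow> nat \<Rightarrow> nat \<Rightarrow> pt \<Rightarrow> real" where
  "struct_fun D j k i x = frame_coord D (lie_bracket (D j) (D k) x) x i"

definition cyclic :: "nat \<Rightarrow> nat \<Rightarrow> nat \<Rightarrow> bool" where
  "cyclic i j k \<longleftrightarrow> (i, j, k) \<in> {(1,2,3), (2,3,1), (3,1,2)}"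

definition MC_pre :: "(nat \<Rightarrow> pt \<Rightarrow> real) \<Rightarrow> (nat \<Rightarrow> pt \<Rightarrow> pt) \<Rightarrow> (pt \<Rightarrow> real) \<Rightarrow> bool" where
  "MC_pre g D \<xi> \<longleftrightarrow>
     (\<forall>i\<in>{1,2,3}. smooth (g i)) \<and> smooth \<xi> \<and> is_frame D \<and>
     (\<forall>x. 0 = g 2 x * g 3 x + g 3 x * g 1 x + g 1 x * g 2 x) \<and>
     (\<forall>i j k x. cyclic i j k \<longrightarrow>
        0 = vf_apply (D i) (\<lambda>y. g j y + g k y) x
            + struct_fun D i j j x * (g i x - g j x)
            + struct_fun D i k k x * (g i x - g k x)
            - 2 * vf_apply (D i) \<xi> x * g i x)"

definition MC_normal :: "(nat \<Rightarrow> pt \<Rightarrow> real) \<Rightarrow> (nat \<Rightarrow> pt \<Rightarrow> pt) \<Rightarrow> (pt \<Rightarrow> real) \<Rightarrow> bool" where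
  "MC_normal g D \<xi> \<longleftrightarrow> MC_pre g D \<xi> \<and>
     (\<exists>u. smooth u \<and> (\<forall>x. u x > 0) \<and>
        (\<forall>x. g 1 x = 1/2 \<and> g 2 x = (-1 - u x) / 2 \<and> g 3 x = (-1 - 1 / u x) / 2)) \<and>
     (\<forall>x. struct_fun D 2 3 1 x = -2)"

end

theory Submission
  imports Defs
begin

text \<open>
  The transformation by (A, B, \<sigma>) maps MC_pre to itself. It rescales the metric functions by A
  and the i-th frame vector by \<sigma> A B^(g_j + g_k); in the transformed (E2) the terms containing
  the derivative of A cancel, while those containing ln B and the derivative of B are multiples of
  the derivative of (E1) and of (E1) itself.

  Normalization therefore reduces to two pointwise equations. The first, A g_1 = 1/2, fixes A, and
  by (E1) and the sign hypotheses the other two metric functions then automatically have the normal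
  shape, with u = -(g_1 + g_2)/g_1 > 0. The second says that the new structure function
  \<sigma> A B^(2 g_1) c^1_23 equals -2. As c^1_23 is continuous and nowhere zero on the connected
  space, it has constant sign; this determines \<sigma> = -sgn c^1_23, then B^(2 g_1), and hence B.
\<close>

section \<open>Vector fields acting as derivations\<close>

lemma vf_apply_has_derivative:
  "(f has_derivative F) (at x) \<Longrightarrow> vf_apply V f x = F (V x)"
  unfolding vf_apply_def by (metis frechet_derivative_at)

lemma vf_apply_const [simp]: "vf_apply V (\<lambda>y. c) = (\<lambda>x. 0)"
  by (simp add: vf_apply_def[abs_def])

lemma vf_apply_add:
  assumes "f differentiable (at x)" "g differentiable (at x)"
  shows "vf_apply V (\<lambda>y. f y + g y) x = vf_apply V f x + vf_apply V g x"
  using vf_apply_has_derivative[OF has_derivative_add[OF assms[unfolded frechet_derivative_works]]]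
  by (simp add: vf_apply_def)

lemma vf_apply_mult:
  assumes "f differentiable (at x)" "g differentiable (at x)"
  shows "vf_apply V (\<lambda>y. f y * g y) x = f x * vf_apply V g x + vf_apply V f x * g x"
  using vf_apply_has_derivative[OF has_derivative_mult[OF assms[unfolded frechet_derivative_works]]]
  by (simp add: vf_apply_def)

lemma vf_apply_inverse:
  assumes "f differentiable (at x)" "f x \<noteq> 0"
  shows "vf_apply V (\<lambda>y. 1 / f y) x = - vf_apply V f x / (f x)\<^sup>2"
  using vf_apply_has_derivative[OF has_derivative_divide[OF has_derivative_const
        assms(1)[unfolded frechet_derivative_works] assms(2), of 1]] assms(2)
  by (simp add: vf_apply_def field_simps power2_eq_square)

lemma vf_apply_exp:
  assumes "f differentiable (at x)"
  shows "vf_apply V (\<lambda>y. exp (f y)) x = exp (f x) * vf_apply V f x"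
  using vf_apply_has_derivative[OF has_derivative_exp[OF assms[unfolded frechet_derivative_works]]]
  by (simp add: vf_apply_def)

lemma vf_apply_ln:
  assumes "f differentiable (at x)" "f x > 0"
  shows "vf_apply V (\<lambda>y. ln (f y)) x = vf_apply V f x / f x"
  using vf_apply_has_derivative[OF has_derivative_ln[OF assms(2) assms(1)[unfolded frechet_derivative_works]]]
  by (simp add: vf_apply_def field_simps)

lemma vf_apply_powr:
  assumes "B differentiable (at x)" "e differentiable (at x)" "B x > 0"
  shows "vf_apply V (\<lambda>y. B y powr e y) x
    = B x powr e x * (vf_apply V e x * ln (B x) + e x * vf_apply V B x / B x)"
  using vf_apply_has_derivative[OF has_derivative_powr[OF
        assms(1)[unfolded frechet_derivative_works] assms(2)[unfolded frechet_derivative_works] assms(3)]]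
  by (simp add: vf_apply_def)

lemma differentiable_exp:
  fixes f :: "pt \<Rightarrow> real"
  assumes "f differentiable (at x)"
  shows "(\<lambda>y. exp (f y)) differentiable (at x)"
  by (rule differentiableI[OF has_derivative_exp[OF assms[unfolded frechet_derivative_works]]])

lemma differentiable_ln:
  fixes f :: "pt \<Rightarrow> real"
  assumes "f differentiable (at x)" "f x > 0"
  shows "(\<lambda>y. ln (f y)) differentiable (at x)"
  by (rule differentiableI[OF has_derivative_ln[OF assms(2) assms(1)[unfolded frechet_derivative_works]]])

section \<open>Smooth functions\<close>

definition partial :: "3 \<Rightarrow> (pt \<Rightarrow> real) \<Rightarrow> pt \<Rightarrow> real" where
  "partial i = vf_apply (\<lambda>_. axis i 1)"

lemma Ck_Suc_iff:
  "Ck (Suc k) f \<longleftrightarrow> (\<forall>x. f differentiable (at x)) \<and> (\<forall>i. Ck k (partial i f))"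
  by (simp add: partial_def vf_apply_def[abs_def])

lemma Ck_imp_continuous_on: "Ck k f \<Longrightarrow> continuous_on UNIV f"
proof (cases k)
  case (Suc k')
  assume "Ck k f"
  with Suc have "\<forall>x. f differentiable (at x)" by simp
  then show ?thesis
    by (intro continuous_at_imp_continuous_on ballI differentiable_imp_continuous_within) auto
qed auto

lemma Ck_SucD: "Ck (Suc k) f \<Longrightarrow> Ck k f"
proof (induction k arbitrary: f)
  case 0
  then show ?case using Ck_imp_continuous_on[OF 0] by simp
next
  case (Suc k)
  then show ?case by (simp add: Ck_Suc_iff del: Ck.simps)
qed

lemma Ck_const: "Ck k (\<lambda>x. c)"
  by (induction k arbitrary: c) (simp_all add: Ck_Suc_iff partial_def del: Ck.simps(2))

lemma Ck_add: "Ck k f \<Longrightarrow> Ck k g \<Longrightarrow> Ck k (\<lambda>x. f x + g x)"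
proof (induction k arbitrary: f g)
  case 0
  then show ?case by (auto intro: continuous_on_add)
next
  case (Suc k)
  then have "partial i (\<lambda>x. f x + g x) = (\<lambda>x. partial i f x + partial i g x)" for i
    by (auto simp: partial_def vf_apply_add Ck_Suc_iff simp del: Ck.simps)
  with Suc show ?case by (auto simp: Ck_Suc_iff simp del: Ck.simps)
qed

lemma Ck_mult: "Ck k f \<Longrightarrow> Ck k g \<Longrightarrow> Ck k (\<lambda>x. f x * g x)"
proof (induction k arbitrary: f g)
  case 0
  then show ?case by (auto intro: continuous_on_mult)
next
  case (Suc k)
  then have "partial i (\<lambda>x. f x * g x) = (\<lambda>x. f x * partial i g x + partial i f x * g x)" for i
    by (auto simp: partial_def vf_apply_mult Ck_Suc_iff simp del: Ck.simps)
  moreover have "Ck k f" "Ck k g"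
    using Suc.prems Ck_SucD by auto
  ultimately show ?case
    using Suc by (auto simp: Ck_Suc_iff intro!: Ck_add simp del: Ck.simps)
qed

lemma Ck_inverse: "Ck k f \<Longrightarrow> \<forall>x. f x \<noteq> 0 \<Longrightarrow> Ck k (\<lambda>x. 1 / f x)"
proof (induction k arbitrary: f)
  case 0
  then show ?case by (auto intro!: continuous_on_divide continuous_on_const)
next
  case (Suc k)
  then have partial_eq: "partial i (\<lambda>x. 1 / f x) = (\<lambda>x. -1 * (partial i f x * (1 / f x * (1 / f x))))" for i
    by (auto simp: partial_def vf_apply_inverse Ck_Suc_iff power2_eq_square simp del: Ck.simps)
  have "Ck k f"
    using Suc.prems Ck_SucD by blast
  with Suc have "Ck k (\<lambda>x. -1 * (partial i f x * (1 / f x * (1 / f x))))" for i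
    by (intro Ck_mult Ck_const) (auto simp: Ck_Suc_iff simp del: Ck.simps)
  moreover have "(\<lambda>y. 1 / f y) differentiable (at x)" for x
    using Suc.prems by (auto simp: Ck_Suc_iff simp del: Ck.simps intro!: derivative_intros)
  ultimately show ?case
    unfolding Ck_Suc_iff partial_eq by blast
qed

lemma Ck_exp: "Ck k f \<Longrightarrow> Ck k (\<lambda>x. exp (f x))"
proof (induction k arbitrary: f)
  case 0
  then show ?case by (auto intro!: continuous_on_exp)
next
  case (Suc k)
  then have "partial i (\<lambda>x. exp (f x)) = (\<lambda>x. exp (f x) * partial i f x)" for i
    by (auto simp: partial_def vf_apply_exp Ck_Suc_iff simp del: Ck.simps)
  moreover have "Ck k f"
    using Suc.prems Ck_SucD by auto
  moreover have "(\<lambda>y. exp (f y)) differentiable (at x)" for x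
    using Suc.prems by (auto simp: Ck_Suc_iff simp del: Ck.simps intro!: differentiable_exp)
  ultimately show ?case
    using Suc by (auto simp: Ck_Suc_iff intro!: Ck_mult simp del: Ck.simps)
qed

lemma Ck_ln:
  assumes "Ck k f" "\<forall>x. f x > 0"
  shows "Ck k (\<lambda>x. ln (f x))"
proof (cases k)
  case 0
  with assms show ?thesis by (auto intro!: continuous_on_ln simp: less_imp_neq[symmetric])
next
  case (Suc k')
  with assms have partial_eq: "partial i (\<lambda>x. ln (f x)) = (\<lambda>x. partial i f x * (1 / f x))" for i
    by (auto simp: partial_def vf_apply_ln Ck_Suc_iff simp del: Ck.simps)
  have "Ck k' f"
    using assms Suc Ck_SucD by blast
  moreover have "\<forall>x. f x \<noteq> 0"
    using assms(2) by (metis less_irrefl)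
  ultimately have "Ck k' (\<lambda>x. partial i f x * (1 / f x))" for i
    using assms Suc by (intro Ck_mult Ck_inverse) (auto simp: Ck_Suc_iff simp del: Ck.simps)
  moreover have "(\<lambda>y. ln (f y)) differentiable (at x)" for x
    using assms Suc by (auto simp: Ck_Suc_iff simp del: Ck.simps intro!: differentiable_ln)
  ultimately show ?thesis
    unfolding Suc Ck_Suc_iff partial_eq by blast
qed

lemma smooth_differentiable: "smooth f \<Longrightarrow> f differentiable (at x)"
  unfolding smooth_def using Ck.simps(2) by blast

lemma smooth_continuous_on: "smooth f \<Longrightarrow> continuous_on UNIV f"
  unfolding smooth_def using Ck_imp_continuous_on by blast

lemma smooth_partial: "smooth f \<Longrightarrow> smooth (partial i f)"
  unfolding smooth_def by (metis Ck_Suc_iff)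

lemma smooth_const [simp]: "smooth (\<lambda>x. c)"
  by (simp add: smooth_def Ck_const)

lemma smooth_add: "smooth f \<Longrightarrow> smooth g \<Longrightarrow> smooth (\<lambda>x. f x + g x)"
  by (simp add: smooth_def Ck_add)

lemma smooth_mult: "smooth f \<Longrightarrow> smooth g \<Longrightarrow> smooth (\<lambda>x. f x * g x)"
  by (simp add: smooth_def Ck_mult)

lemma smooth_minus: "smooth f \<Longrightarrow> smooth (\<lambda>x. - f x)"
  using smooth_mult[OF smooth_const[of "-1"]] by simp

lemma smooth_diff: "smooth f \<Longrightarrow> smooth g \<Longrightarrow> smooth (\<lambda>x. f x - g x)"
  using smooth_add[OF _ smooth_minus] by simp

lemma smooth_divide: "smooth f \<Longrightarrow> smooth g \<Longrightarrow> \<forall>x. g x \<noteq> 0 \<Longrightarrow> smooth (\<lambda>x. f x / g x)"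
  using smooth_mult[of f "\<lambda>x. 1 / g x"] by (simp add: smooth_def Ck_inverse)

lemma smooth_ln: "smooth f \<Longrightarrow> \<forall>x. f x > 0 \<Longrightarrow> smooth (\<lambda>x. ln (f x))"
  by (simp add: smooth_def Ck_ln)

lemma smooth_powr:
  assumes "smooth B" "smooth e" "\<forall>x. B x > 0"
  shows "smooth (\<lambda>x. B x powr e x)"
proof -
  have "(\<lambda>x. B x powr e x) = (\<lambda>x. exp (e x * ln (B x)))"
    using assms(3) by (simp add: powr_def less_imp_neq[symmetric])
  with assms show ?thesis
    by (simp add: smooth_def Ck_exp Ck_mult Ck_ln)
qed

lemma smooth_sum: "finite S \<Longrightarrow> (\<And>l. l \<in> S \<Longrightarrow> smooth (F l)) \<Longrightarrow> smooth (\<lambda>x. \<Sum>l\<in>S. F l x)"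
  by (induction S rule: finite_induct) (auto intro: smooth_add)

section \<open>Smooth vector fields and the Lie bracket\<close>

lemma smooth_vf_differentiable:
  assumes "smooth_vf V"
  shows "V differentiable (at x)"
proof -
  have "(\<lambda>y. V y \<bullet> b) differentiable (at x)" if "b \<in> Basis" for b
  proof -
    from that obtain j where "b = axis j (1::real)"
      by (auto simp: Basis_vec_def)
    then have "(\<lambda>y. V y \<bullet> b) = (\<lambda>y. V y $ j)"
      by (simp add: inner_axis)
    then show ?thesis
      using assms smooth_differentiable unfolding smooth_vf_def by metis
  qed
  then show ?thesis
    using differentiable_componentwise_within[of V x UNIV] by simp
qed

lemma vf_apply_component:
  assumes "W differentiable (at x)"
  shows "vf_apply V (\<lambda>y. W y $ m) x = frechet_derivative W (at x) (V x) $ m"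
  by (rule vf_apply_has_derivative[OF bounded_linear.has_derivative[OF bounded_linear_vec_nth
        assms[unfolded frechet_derivative_works]]])

lemma vf_apply_in_coordinates:
  assumes "f differentiable (at x)"
  shows "vf_apply V f x = (\<Sum>n\<in>UNIV. V x $ n * partial n f x)"
proof -
  have lin: "linear (frechet_derivative f (at x))"
    by (rule linear_frechet_derivative[OF assms])
  have "vf_apply V f x = frechet_derivative f (at x) (\<Sum>n\<in>UNIV. V x $ n *\<^sub>R axis n 1)"
    using basis_expansion[of "V x"] by (simp add: vf_apply_def scalar_mult_eq_scaleR)
  also have "\<dots> = (\<Sum>n\<in>UNIV. V x $ n * partial n f x)"
    by (simp add: linear_sum[OF lin] linear_scale[OF lin] partial_def vf_apply_def)
  finally show ?thesis .
qed

lemma lie_bracket_component: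
  assumes "V differentiable (at x)" "W differentiable (at x)"
  shows "lie_bracket V W x $ m = vf_apply V (\<lambda>y. W y $ m) x - vf_apply W (\<lambda>y. V y $ m) x"
  using assms by (simp add: lie_bracket_def vf_apply_component)

lemma smooth_vf_lie_bracket:
  assumes "smooth_vf V" "smooth_vf W"
  shows "smooth_vf (lie_bracket V W)"
proof -
  have "lie_bracket V W x $ m = (\<Sum>n\<in>UNIV. V x $ n * partial n (\<lambda>y. W y $ m) x)
      - (\<Sum>n\<in>UNIV. W x $ n * partial n (\<lambda>y. V y $ m) x)" for x m
    using assms by (simp add: lie_bracket_component vf_apply_in_coordinates
        smooth_vf_differentiable smooth_differentiable smooth_vf_def)
  with assms show ?thesis
    unfolding smooth_vf_def by (simp add: smooth_diff smooth_sum smooth_mult smooth_partial)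
qed

lemma smooth_inner: "smooth_vf V \<Longrightarrow> smooth_vf W \<Longrightarrow> smooth (\<lambda>x. V x \<bullet> W x)"
  unfolding inner_vec_def smooth_vf_def by (intro smooth_sum) (auto intro: smooth_mult)

lemma smooth_vf_cross3: "smooth_vf V \<Longrightarrow> smooth_vf W \<Longrightarrow> smooth_vf (\<lambda>x. cross3 (V x) (W x))"
  unfolding smooth_vf_def
proof
  fix i :: 3
  assume "\<forall>i. smooth (\<lambda>x. V x $ i)" "\<forall>i. smooth (\<lambda>x. W x $ i)"
  then show "smooth (\<lambda>x. cross3 (V x) (W x) $ i)"
    using exhaust_3[of i] by (auto simp: cross_components intro!: smooth_diff smooth_mult)
qed

lemma smooth_vf_scaleR: "smooth f \<Longrightarrow> smooth_vf V \<Longrightarrow> smooth_vf (\<lambda>x. f x *\<^sub>R V x)"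
  unfolding smooth_vf_def by (auto intro!: smooth_mult)

lemma vf_apply_scaleR:
  assumes "f differentiable (at x)"
  shows "vf_apply (\<lambda>y. h y *\<^sub>R V y) f x = h x * vf_apply V f x"
  using linear_frechet_derivative[OF assms] by (simp add: vf_apply_def linear_scale)

lemma frechet_derivative_scaleR:
  assumes "h differentiable (at x)" "V differentiable (at x)"
  shows "frechet_derivative (\<lambda>y. h y *\<^sub>R V y) (at x) v
    = vf_apply (\<lambda>_. v) h x *\<^sub>R V x + h x *\<^sub>R frechet_derivative V (at x) v"
proof -
  have "((\<lambda>y. h y *\<^sub>R V y) has_derivative
      (\<lambda>v. h x *\<^sub>R frechet_derivative V (at x) v + frechet_derivative h (at x) v *\<^sub>R V x)) (at x)"
    using has_derivative_scaleR assms[unfolded frechet_derivative_works] by blast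
  from fun_cong[OF frechet_derivative_at[OF this], of v] show ?thesis
    by (simp add: vf_apply_def add.commute)
qed

lemma lie_bracket_scaleR:
  assumes "f differentiable (at x)" "h differentiable (at x)"
    "V differentiable (at x)" "W differentiable (at x)"
  shows "lie_bracket (\<lambda>y. f y *\<^sub>R V y) (\<lambda>y. h y *\<^sub>R W y) x
    = (f x * h x) *\<^sub>R lie_bracket V W x + (f x * vf_apply V h x) *\<^sub>R W x
      - (h x * vf_apply W f x) *\<^sub>R V x"
proof -
  have "linear (frechet_derivative V (at x))" "linear (frechet_derivative W (at x))"
    "linear (frechet_derivative f (at x))" "linear (frechet_derivative h (at x))"
    using assms linear_frechet_derivative by auto
  then show ?thesis
    unfolding lie_bracket_def frechet_derivative_scaleR[OF assms(2,4)]
      frechet_derivative_scaleR[OF assms(1,3)] vf_apply_def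
    by (simp add: linear_scale algebra_simps)
qed

section \<open>Frames and structure functions\<close>

lemma cross3_triple_product_expansion:
  fixes a b c v :: "real^3"
  shows "(a \<bullet> cross3 b c) *\<^sub>R v
    = (v \<bullet> cross3 b c) *\<^sub>R a + (v \<bullet> cross3 c a) *\<^sub>R b + (v \<bullet> cross3 a b) *\<^sub>R c"
  by (simp add: cross3_simps forall_3)

lemma sum_123: "(\<Sum>l\<in>{1,2,3::nat}. F l) = F 1 + F 2 + F 3"
  by (simp add: add.assoc)

lemma is_frame_smooth_vf: "is_frame D \<Longrightarrow> l \<in> {1,2,3} \<Longrightarrow> smooth_vf (D l)"
  unfolding is_frame_def by blast

lemma is_frame_independent:
  assumes "is_frame D" "(\<Sum>l\<in>{1,2,3}. a l *\<^sub>R D l x) = 0" "l \<in> {1,2,3}"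
  shows "a l = 0"
  using assms unfolding is_frame_def by blast

lemma is_frame_independent3:
  assumes "is_frame D" "\<alpha> *\<^sub>R D 1 x + \<beta> *\<^sub>R D 2 x + \<gamma> *\<^sub>R D 3 x = 0"
  shows "\<alpha> = 0 \<and> \<beta> = 0 \<and> \<gamma> = 0"
proof -
  let ?a = "\<lambda>l::nat. if l = 1 then \<alpha> else if l = 2 then \<beta> else \<gamma>"
  have "(\<Sum>l\<in>{1,2,3}. ?a l *\<^sub>R D l x) = 0"
    using assms(2) unfolding sum_123 by simp
  from is_frame_independent[OF assms(1) this] have "?a l = 0" if "l \<in> {1,2,3}" for l
    using that by blast
  from this[of 1] this[of 2] this[of 3] show ?thesis
    by simp
qed

definition frame_volume :: "(nat \<Rightarrow> pt \<Rightarrow> pt) \<Rightarrow> pt \<Rightarrow> real" where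
  "frame_volume D x = D 1 x \<bullet> cross3 (D 2 x) (D 3 x)"

lemma frame_volume_nonzero:
  assumes frame: "is_frame D"
  shows "frame_volume D x \<noteq> 0"
proof
  assume vol: "frame_volume D x = 0"
  let ?c = "cross3 (D 2 x) (D 3 x)"
  have "(?c \<bullet> ?c) *\<^sub>R D 1 x + (?c \<bullet> cross3 (D 3 x) (D 1 x)) *\<^sub>R D 2 x
      + (?c \<bullet> cross3 (D 1 x) (D 2 x)) *\<^sub>R D 3 x = 0"
    using cross3_triple_product_expansion[of "D 1 x" "D 2 x" "D 3 x" ?c] vol
    by (simp add: frame_volume_def)
  then have "?c \<bullet> ?c = 0"
    using is_frame_independent3[OF frame] by blast
  then have "?c = 0"
    by simp
  then have "cross3 (D 3 x) (D 2 x) = 0"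
    using cross_skew[of "D 3 x" "D 2 x"] by simp
  then have "cross3 (D 2 x) (cross3 (D 3 x) (D 2 x)) = 0"
    by simp
  then have "0 *\<^sub>R D 1 x + (- (D 2 x \<bullet> D 3 x)) *\<^sub>R D 2 x + (D 2 x \<bullet> D 2 x) *\<^sub>R D 3 x = 0"
    by (simp add: Lagrange inner_commute)
  then have "D 2 x \<bullet> D 2 x = 0"
    using is_frame_independent3[OF frame] by blast
  then have "D 2 x = 0"
    by simp
  then show False
    using is_frame_independent3[OF frame, of 0 x 1 0] by simp
qed

lemma frame_coord_unique:
  assumes frame: "is_frame D" and v: "v = (\<Sum>l\<in>{1,2,3}. a l *\<^sub>R D l x)" and i: "i \<in> {1,2,3}"
  shows "frame_coord D v x i = a i"
  unfolding frame_coord_def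
proof (rule the_equality)
  show "\<exists>a'. v = (\<Sum>l\<in>{1,2,3}. a' l *\<^sub>R D l x) \<and> a i = a' i"
    using v by blast
next
  fix c
  assume "\<exists>a'. v = (\<Sum>l\<in>{1,2,3}. a' l *\<^sub>R D l x) \<and> c = a' i"
  then obtain a' where a': "v = (\<Sum>l\<in>{1,2,3}. a' l *\<^sub>R D l x)" "c = a' i"
    by blast
  have "(\<Sum>l\<in>{1,2,3}. (a l - a' l) *\<^sub>R D l x) = 0"
    using v a'(1) unfolding sum_123 by (simp add: algebra_simps)
  then show "c = a i"
    using is_frame_independent[OF frame _ i] a'(2) by force
qed

lemma frame_coord_cramer:
  assumes frame: "is_frame D" and "cyclic i j k"
  shows "frame_coord D v x i = (v \<bullet> cross3 (D j x) (D k x)) / frame_volume D x"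
proof -
  define a where "a l = (if l = 1 then v \<bullet> cross3 (D 2 x) (D 3 x)
      else if l = 2 then v \<bullet> cross3 (D 3 x) (D 1 x) else v \<bullet> cross3 (D 1 x) (D 2 x))
      / frame_volume D x" for l :: nat
  have "frame_volume D x *\<^sub>R v = frame_volume D x *\<^sub>R (\<Sum>l\<in>{1,2,3}. a l *\<^sub>R D l x)"
    using cross3_triple_product_expansion[of "D 1 x" "D 2 x" "D 3 x" v] frame_volume_nonzero[OF frame]
    by (simp add: sum_123 a_def frame_volume_def scaleR_add_right)
  then have "v = (\<Sum>l\<in>{1,2,3}. a l *\<^sub>R D l x)"
    using frame_volume_nonzero[OF frame] by simp
  from frame_coord_unique[OF frame this] assms(2) show ?thesis
    by (auto simp: cyclic_def a_def)
qed

lemma frame_expansion: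
  assumes "is_frame D"
  shows "v = (\<Sum>l\<in>{1,2,3}. frame_coord D v x l *\<^sub>R D l x)"
proof -
  have "frame_volume D x *\<^sub>R v = frame_volume D x *\<^sub>R (\<Sum>l\<in>{1,2,3}. frame_coord D v x l *\<^sub>R D l x)"
    using cross3_triple_product_expansion[of "D 1 x" "D 2 x" "D 3 x" v] frame_volume_nonzero[OF assms]
    by (simp add: sum_123 frame_coord_cramer[OF assms] cyclic_def frame_volume_def scaleR_add_right)
  then show ?thesis
    using frame_volume_nonzero[OF assms] by simp
qed

lemma smooth_struct_fun:
  assumes frame: "is_frame D" and "j \<in> {1,2,3}" "k \<in> {1,2,3}" "i \<in> {1,2,3}"
  shows "smooth (struct_fun D j k i)"
proof -
  obtain i' i'' where cyc: "cyclic i i' i''" and "i' \<in> {1,2,3}" "i'' \<in> {1,2,3}"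
    using assms(4) unfolding cyclic_def by auto
  have "smooth_vf (lie_bracket (D j) (D k))"
    using assms is_frame_smooth_vf by (blast intro: smooth_vf_lie_bracket)
  moreover have "smooth (frame_volume D)"
    unfolding frame_volume_def[abs_def] using is_frame_smooth_vf[OF frame]
    by (intro smooth_inner smooth_vf_cross3) auto
  ultimately show ?thesis
    unfolding struct_fun_def frame_coord_cramer[OF frame cyc]
    using is_frame_smooth_vf[OF frame] frame_volume_nonzero[OF frame] \<open>i' \<in> _\<close> \<open>i'' \<in> _\<close>
    by (intro smooth_divide smooth_inner smooth_vf_cross3) auto
qed

lemma is_frame_rescale:
  assumes frame: "is_frame D"
    and f: "\<And>l. l \<in> {1,2,3} \<Longrightarrow> smooth (f l)" "\<And>l x. l \<in> {1,2,3} \<Longrightarrow> f l x \<noteq> 0"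
  shows "is_frame (\<lambda>i x. f i x *\<^sub>R D i x)"
  unfolding is_frame_def
proof (intro conjI ballI allI impI)
  fix i :: nat
  assume "i \<in> {1,2,3}"
  then show "smooth_vf (\<lambda>x. f i x *\<^sub>R D i x)"
    using f is_frame_smooth_vf[OF frame] by (intro smooth_vf_scaleR) auto
next
  fix x a l
  assume "(\<Sum>l\<in>{1,2,3::nat}. a l *\<^sub>R f l x *\<^sub>R D l x) = 0" and l: "l \<in> {1,2,3::nat}"
  then have "(\<Sum>l\<in>{1,2,3}. (a l * f l x) *\<^sub>R D l x) = 0"
    by simp
  from is_frame_independent[OF frame this l] show "a l = 0"
    using f(2)[OF l] by simp
qed

lemma struct_fun_rescale:
  assumes frame: "is_frame D"
    and f: "\<And>l. l \<in> {1,2,3} \<Longrightarrow> smooth (f l)" "\<And>l x. l \<in> {1,2,3} \<Longrightarrow> f l x \<noteq> 0"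
    and j: "j \<in> {1,2,3}" and k: "k \<in> {1,2,3}" and l: "l \<in> {1,2,3}"
  shows "struct_fun (\<lambda>i x. f i x *\<^sub>R D i x) j k l x =
    (f j x * f k x * struct_fun D j k l x + (if l = k then f j x * vf_apply (D j) (f k) x else 0)
      - (if l = j then f k x * vf_apply (D k) (f j) x else 0)) / f l x"
proof -
  define b where "b l = f j x * f k x * struct_fun D j k l x
      + (if l = k then f j x * vf_apply (D j) (f k) x else 0)
      - (if l = j then f k x * vf_apply (D k) (f j) x else 0)" for l
  have D_diff: "D i differentiable (at x)" if "i \<in> {1,2,3}" for i
    using is_frame_smooth_vf[OF frame that] smooth_vf_differentiable by blast
  have f_diff: "f i differentiable (at x)" if "i \<in> {1,2,3}" for i
    using f(1)[OF that] smooth_differentiable by blast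
  have delta: "(\<Sum>l\<in>{1,2,3}. (if l = m then c else 0) *\<^sub>R D l x) = c *\<^sub>R D m x"
    if "m \<in> {1,2,3::nat}" for m c
    using that by auto
  have "lie_bracket (\<lambda>y. f j y *\<^sub>R D j y) (\<lambda>y. f k y *\<^sub>R D k y) x
      = (f j x * f k x) *\<^sub>R lie_bracket (D j) (D k) x + (f j x * vf_apply (D j) (f k) x) *\<^sub>R D k x
        - (f k x * vf_apply (D k) (f j) x) *\<^sub>R D j x"
    by (rule lie_bracket_scaleR[OF f_diff[OF j] f_diff[OF k] D_diff[OF j] D_diff[OF k]])
  also have "\<dots> = (\<Sum>l\<in>{1,2,3}. b l *\<^sub>R D l x)"
  proof -
    have "lie_bracket (D j) (D k) x = (\<Sum>l\<in>{1,2,3}. struct_fun D j k l x *\<^sub>R D l x)"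
      unfolding struct_fun_def by (rule frame_expansion[OF frame])
    moreover note delta[OF k, of "f j x * vf_apply (D j) (f k) x", symmetric]
      delta[OF j, of "f k x * vf_apply (D k) (f j) x", symmetric]
    ultimately show ?thesis
      unfolding b_def by (simp add: scaleR_add_right scaleR_add_left scaleR_diff_left)
  qed
  also have "\<dots> = (\<Sum>l\<in>{1,2,3}. (b l / f l x) *\<^sub>R (f l x *\<^sub>R D l x))"
    using f(2) by (intro sum.cong) auto
  finally have "lie_bracket (\<lambda>y. f j y *\<^sub>R D j y) (\<lambda>y. f k y *\<^sub>R D k y) x
      = (\<Sum>l\<in>{1,2,3}. (b l / f l x) *\<^sub>R (f l x *\<^sub>R D l x))" .
  from frame_coord_unique[OF is_frame_rescale[OF frame f] this l] show ?thesis
    by (simp add: struct_fun_def b_def)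
qed

lemma struct_fun_rescale_diag:
  assumes "is_frame D"
    and "\<And>l. l \<in> {1,2,3} \<Longrightarrow> smooth (f l)" "\<And>l x. l \<in> {1,2,3} \<Longrightarrow> f l x \<noteq> 0"
    and "i \<in> {1,2,3}" "j \<in> {1,2,3}" "i \<noteq> j"
  shows "struct_fun (\<lambda>i x. f i x *\<^sub>R D i x) i j j x
    = f i x * (struct_fun D i j j x + vf_apply (D i) (f j) x / f j x)"
  using struct_fun_rescale[OF assms(1-3), where j=i and k=j and l=j and x=x] assms(3-6)
  by (simp add: field_simps)

section \<open>The gauge transformation\<close>

abbreviation gauge_factor :: "real \<Rightarrow> (pt \<Rightarrow> real) \<Rightarrow> (pt \<Rightarrow> real) \<Rightarrow> (nat \<Rightarrow> pt \<Rightarrow> real) \<Rightarrow> nat \<Rightarrow> pt \<Rightarrow> real"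
  where "gauge_factor \<sigma> A B g \<equiv> \<lambda>i x. \<sigma> * A x * B x powr (\<Sum>l\<in>{1,2,3} - {i}. g l x)"

lemma cyclic_rotate: "cyclic i j k \<Longrightarrow> cyclic j k i"
  by (auto simp: cyclic_def)

lemma cyclic_indices:
  "cyclic i j k \<Longrightarrow> i \<in> {1,2,3} \<and> j \<in> {1,2,3} \<and> k \<in> {1,2,3} \<and> i \<noteq> j \<and> j \<noteq> k \<and> k \<noteq> i"
  by (auto simp: cyclic_def)

lemma cyclic_sum_others: "cyclic i j k \<Longrightarrow> (\<Sum>l\<in>{1,2,3} - {i}. F l) = F j + F k"
  by (auto simp: cyclic_def insert_Diff_if add_ac)

lemma cyclic_sum_all:
  fixes F :: "nat \<Rightarrow> 'a::comm_monoid_add"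
  shows "cyclic i j k \<Longrightarrow> F 1 + F 2 + F 3 = F i + F j + F k"
  by (auto simp: cyclic_def add_ac)

lemma vf_apply_gauge_factor:
  assumes "A differentiable (at x)" "B differentiable (at x)" "e differentiable (at x)"
    "A x \<noteq> 0" "B x > 0"
  shows "vf_apply V (\<lambda>y. \<sigma> * A y * B y powr e y) x = \<sigma> * A x * B x powr e x
    * (vf_apply V A x / A x + vf_apply V e x * ln (B x) + e x * vf_apply V B x / B x)"
proof -
  have "(\<lambda>y. B y powr e y) differentiable (at x)"
    by (rule differentiableI[OF has_derivative_powr[OF assms(2,3)[unfolded frechet_derivative_works]
          assms(5)]]) simp
  moreover have "(\<lambda>y. \<sigma> * A y) differentiable (at x)"
    using assms(1) by simp
  ultimately show ?thesis
    using assms by (simp add: vf_apply_mult vf_apply_powr field_simps)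
qed

lemma smooth_gauge_factor:
  assumes "\<forall>l\<in>{1,2,3}. smooth (g l)" "smooth A" "smooth B" "\<forall>x. B x > 0"
  shows "smooth (gauge_factor \<sigma> A B g i)"
  using assms by (intro smooth_mult smooth_powr smooth_sum) auto

lemma gauge_factor_nonzero:
  "\<sigma> \<noteq> 0 \<Longrightarrow> A x > 0 \<Longrightarrow> B x > 0 \<Longrightarrow> gauge_factor \<sigma> A B g i x \<noteq> 0"
  by simp

text \<open>The transformed (E2) at index i, with f the rescaling of D_i and a, b the values of A, B:
  the three brackets on the right are (E2), the derivative of (E1) along D_i, and (E1).\<close>
lemma gauge_E2_expansion:
  fixes f gi gj gk dgi dgj dgk a da b db cj ck d\<xi> :: real
  assumes "a \<noteq> 0" "b \<noteq> 0"
  shows "f * (da * (gj + gk) + a * (dgj + dgk))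
      + f * (cj + (da / a + (dgk + dgi) * ln b + (gk + gi) * db / b)) * (a * gi - a * gj)
      + f * (ck + (da / a + (dgi + dgj) * ln b + (gi + gj) * db / b)) * (a * gi - a * gk)
      - 2 * (f * (d\<xi> + da / a + (dgi + dgj + dgk) * ln b + (gi + gj + gk) * db / b)) * (a * gi)
    = f * a * (dgj + dgk + cj * (gi - gj) + ck * (gi - gk) - 2 * d\<xi> * gi)
      - f * a * ln b * (dgi * (gj + gk) + dgj * (gk + gi) + dgk * (gi + gj))
      - 2 * f * a * (db / b) * (gi * gj + gj * gk + gk * gi)"
  using assms by (simp add: field_simps)

lemma log_derivative_gauge_factor:
  assumes g: "\<forall>l\<in>{1,2,3}. smooth (g l)" and A: "smooth A" "\<forall>y. A y > 0"
    and B: "smooth B" "\<forall>y. B y > 0" and \<sigma>: "\<sigma> \<noteq> 0" and cyc: "cyclic l m n"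
  shows "vf_apply V (gauge_factor \<sigma> A B g l) x / gauge_factor \<sigma> A B g l x
    = vf_apply V A x / A x + (vf_apply V (g m) x + vf_apply V (g n) x) * ln (B x)
      + (g m x + g n x) * vf_apply V B x / B x"
proof -
  have f_eq: "gauge_factor \<sigma> A B g l = (\<lambda>y. \<sigma> * A y * B y powr (g m y + g n y))"
    using cyclic_sum_others[OF cyc, of "\<lambda>l'. g l' _"] by simp
  have g_diff: "g m differentiable (at x)" "g n differentiable (at x)"
    using cyclic_indices[OF cyc] g smooth_differentiable by auto
  then have "vf_apply V (gauge_factor \<sigma> A B g l) x = \<sigma> * A x * B x powr (g m x + g n x)
      * (vf_apply V A x / A x + vf_apply V (\<lambda>y. g m y + g n y) x * ln (B x)
        + (g m x + g n x) * vf_apply V B x / B x)"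
    unfolding f_eq using A B smooth_differentiable
    by (intro vf_apply_gauge_factor) (auto simp: less_imp_neq[symmetric])
  with g_diff \<sigma> A(2)[rule_format, of x] B(2)[rule_format, of x] fun_cong[OF f_eq, of x]
  show ?thesis
    by (simp add: vf_apply_add)
qed

lemma struct_fun_gauge_diag:
  assumes MC: "MC_pre g D \<xi>" and A: "smooth A" "\<forall>y. A y > 0" and B: "smooth B" "\<forall>y. B y > 0"
    and \<sigma>: "\<sigma> \<noteq> 0" and cyc: "cyclic l m n" and i: "i \<in> {1,2,3}" "i \<noteq> l"
  shows "struct_fun (\<lambda>l y. gauge_factor \<sigma> A B g l y *\<^sub>R D l y) i l l x
    = gauge_factor \<sigma> A B g i x * (struct_fun D i l l x + (vf_apply (D i) A x / A x
      + (vf_apply (D i) (g m) x + vf_apply (D i) (g n) x) * ln (B x)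
      + (g m x + g n x) * vf_apply (D i) B x / B x))"
proof -
  have frame: "is_frame D" and g_smooth: "\<forall>l\<in>{1,2,3}. smooth (g l)"
    using MC unfolding MC_pre_def by auto
  have "struct_fun (\<lambda>l y. gauge_factor \<sigma> A B g l y *\<^sub>R D l y) i l l x
      = gauge_factor \<sigma> A B g i x * (struct_fun D i l l x
        + vf_apply (D i) (gauge_factor \<sigma> A B g l) x / gauge_factor \<sigma> A B g l x)"
    using g_smooth A B \<sigma> i cyclic_indices[OF cyc]
    by (intro struct_fun_rescale_diag[OF frame] smooth_gauge_factor gauge_factor_nonzero) auto
  then show ?thesis
    unfolding log_derivative_gauge_factor[OF g_smooth A B \<sigma> cyc] .
qed

lemma vf_apply_gauge_potential:
  assumes "\<xi> differentiable (at x)" "A differentiable (at x)" "B differentiable (at x)"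
    "s differentiable (at x)" "A x > 0" "B x > 0"
  shows "(\<lambda>y. \<xi> y + ln (A y) + s y * ln (B y)) differentiable (at x)"
    and "vf_apply V (\<lambda>y. \<xi> y + ln (A y) + s y * ln (B y)) x
      = vf_apply V \<xi> x + vf_apply V A x / A x + vf_apply V s x * ln (B x) + s x * vf_apply V B x / B x"
  using assms
  by (auto intro!: differentiable_add differentiable_mult differentiable_ln
      simp: vf_apply_add vf_apply_mult vf_apply_ln differentiable_ln)

lemma vf_apply_E1:
  fixes a b c :: "pt \<Rightarrow> real"
  assumes "\<forall>y. a y * b y + b y * c y + c y * a y = 0"
    and "a differentiable (at x)" "b differentiable (at x)" "c differentiable (at x)"
  shows "vf_apply V a x * (b x + c x) + vf_apply V b x * (c x + a x) + vf_apply V c x * (a x + b x) = 0"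
proof -
  have "(\<lambda>y. a y * b y + b y * c y + c y * a y) = (\<lambda>y. 0)"
    using assms(1) by simp
  then have "vf_apply V (\<lambda>y. a y * b y + b y * c y + c y * a y) x = 0"
    by simp
  with assms(2-4) show ?thesis
    by (simp add: vf_apply_add vf_apply_mult algebra_simps)
qed

lemma MC_pre_E1:
  "MC_pre g D \<xi> \<Longrightarrow> cyclic i j k \<Longrightarrow> g i y * g j y + g j y * g k y + g k y * g i y = 0"
  unfolding MC_pre_def cyclic_def by (auto simp: algebra_simps)

lemma MC_pre_E2:
  "MC_pre g D \<xi> \<Longrightarrow> cyclic i j k \<Longrightarrow>
    0 = vf_apply (D i) (\<lambda>y. g j y + g k y) x + struct_fun D i j j x * (g i x - g j x)
      + struct_fun D i k k x * (g i x - g k x) - 2 * vf_apply (D i) \<xi> x * g i x"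
  unfolding MC_pre_def by blast

lemma gauge_E2:
  fixes g :: "nat \<Rightarrow> pt \<Rightarrow> real"
  assumes MC: "MC_pre g D \<xi>" and A: "smooth A" "\<forall>y. A y > 0" and B: "smooth B" "\<forall>y. B y > 0"
    and \<sigma>: "\<sigma> \<noteq> 0" and cyc: "cyclic i j k"
  defines "D' \<equiv> \<lambda>l y. gauge_factor \<sigma> A B g l y *\<^sub>R D l y"
  shows "0 = vf_apply (D' i) (\<lambda>y. A y * g j y + A y * g k y) x
      + struct_fun D' i j j x * (A x * g i x - A x * g j x)
      + struct_fun D' i k k x * (A x * g i x - A x * g k x)
      - 2 * vf_apply (D' i) (\<lambda>y. \<xi> y + ln (A y) + (g 1 y + g 2 y + g 3 y) * ln (B y)) x * (A x * g i x)"
proof -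
  let ?d = "\<lambda>h. vf_apply (D i) h x"
  have g_smooth: "\<forall>l\<in>{1,2,3}. smooth (g l)" and "smooth \<xi>"
    using MC unfolding MC_pre_def by auto
  have idx: "i \<in> {1,2,3}" "j \<in> {1,2,3}" "k \<in> {1,2,3}" "i \<noteq> j" "j \<noteq> k" "k \<noteq> i"
    using cyclic_indices[OF cyc] by auto
  have g_diff: "g l differentiable (at x)" if "l \<in> {1,2,3}" for l
    using g_smooth that smooth_differentiable by blast
  have A_diff: "A differentiable (at x)" and B_diff: "B differentiable (at x)"
    and \<xi>_diff: "\<xi> differentiable (at x)"
    using A(1) B(1) \<open>smooth \<xi>\<close> smooth_differentiable by auto
  have Ax: "A x > 0" and Bx: "B x > 0"
    using A B by auto
  have action: "vf_apply (D' i) h x = gauge_factor \<sigma> A B g i x * ?d h" if "h differentiable (at x)" for h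
    unfolding D'_def by (rule vf_apply_scaleR[OF that])
  have metric_diff: "(\<lambda>y. A y * g j y + A y * g k y) differentiable (at x)"
    using A_diff g_diff idx by auto
  have d_metric: "?d (\<lambda>y. A y * g j y + A y * g k y)
      = ?d A * (g j x + g k x) + A x * (?d (g j) + ?d (g k))"
    using A_diff g_diff idx by (simp add: vf_apply_add vf_apply_mult algebra_simps)
  have sum_cyc: "g 1 y + g 2 y + g 3 y = g i y + g j y + g k y" for y
    using cyclic_sum_all[OF cyc, of "\<lambda>l. g l y"] by simp
  have "(\<lambda>y. g i y + g j y + g k y) differentiable (at x)"
    using g_diff idx by auto
  note potential = vf_apply_gauge_potential[OF \<xi>_diff A_diff B_diff this Ax Bx]
  have d_sum: "?d (\<lambda>y. g i y + g j y + g k y) = ?d (g i) + ?d (g j) + ?d (g k)"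
    using g_diff idx by (simp add: vf_apply_add)
  note struct = struct_fun_gauge_diag[OF MC A B \<sigma> cyclic_rotate[OF cyc] idx(1,4)]
    struct_fun_gauge_diag[OF MC A B \<sigma> cyclic_rotate[OF cyclic_rotate[OF cyc]] idx(1) idx(6)[symmetric]]
  have E1: "g i x * g j x + g j x * g k x + g k x * g i x = 0"
    using MC_pre_E1[OF MC cyc] .
  have dE1: "?d (g i) * (g j x + g k x) + ?d (g j) * (g k x + g i x) + ?d (g k) * (g i x + g j x) = 0"
    using MC_pre_E1[OF MC cyc] g_diff idx by (intro vf_apply_E1) auto
  have E2: "?d (g j) + ?d (g k) + struct_fun D i j j x * (g i x - g j x)
      + struct_fun D i k k x * (g i x - g k x) - 2 * ?d \<xi> * g i x = 0"
    using MC_pre_E2[OF MC cyc, of x] g_diff idx by (simp add: vf_apply_add)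
  show ?thesis
    unfolding D'_def sum_cyc
    unfolding action[OF metric_diff, unfolded D'_def] action[OF potential(1), unfolded D'_def]
      d_metric potential(2) d_sum struct
      gauge_E2_expansion[OF less_imp_neq[OF Ax, symmetric] less_imp_neq[OF Bx, symmetric]] E1 dE1 E2
    by simp
qed

lemma MC_pre_gauge:
  fixes g :: "nat \<Rightarrow> pt \<Rightarrow> real"
  assumes MC: "MC_pre g D \<xi>" and A: "smooth A" "\<forall>y. A y > 0" and B: "smooth B" "\<forall>y. B y > 0"
    and \<sigma>: "\<sigma> \<noteq> 0"
  shows "MC_pre (\<lambda>i x. A x * g i x) (\<lambda>i x. gauge_factor \<sigma> A B g i x *\<^sub>R D i x)
    (\<lambda>x. \<xi> x + ln (A x) + (g 1 x + g 2 x + g 3 x) * ln (B x))"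
proof -
  have frame: "is_frame D" and g_smooth: "\<forall>l\<in>{1,2,3}. smooth (g l)" and "smooth \<xi>"
    and E1: "\<forall>y. 0 = g 2 y * g 3 y + g 3 y * g 1 y + g 1 y * g 2 y"
    using MC unfolding MC_pre_def by auto
  show ?thesis
    unfolding MC_pre_def
  proof (intro conjI ballI allI impI)
    show "smooth (\<lambda>x. A x * g i x)" if "i \<in> {1,2,3}" for i
      using A g_smooth that by (intro smooth_mult) auto
    show "smooth (\<lambda>x. \<xi> x + ln (A x) + (g 1 x + g 2 x + g 3 x) * ln (B x))"
      using \<open>smooth \<xi>\<close> A B g_smooth by (intro smooth_add smooth_mult smooth_ln) auto
    show "is_frame (\<lambda>i x. gauge_factor \<sigma> A B g i x *\<^sub>R D i x)"
      using A B \<sigma> g_smooth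
      by (intro is_frame_rescale[OF frame] smooth_gauge_factor gauge_factor_nonzero) auto
    show "0 = A x * g 2 x * (A x * g 3 x) + A x * g 3 x * (A x * g 1 x) + A x * g 1 x * (A x * g 2 x)"
      for x
    proof -
      have "A x * g 2 x * (A x * g 3 x) + A x * g 3 x * (A x * g 1 x) + A x * g 1 x * (A x * g 2 x)
          = A x * A x * (g 2 x * g 3 x + g 3 x * g 1 x + g 1 x * g 2 x)"
        by (simp add: algebra_simps)
      with E1 show ?thesis
        by simp
    qed
    show "0 = vf_apply (\<lambda>x. gauge_factor \<sigma> A B g i x *\<^sub>R D i x) (\<lambda>y. A y * g j y + A y * g k y) x
        + struct_fun (\<lambda>i x. gauge_factor \<sigma> A B g i x *\<^sub>R D i x) i j j x * (A x * g i x - A x * g j x)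
        + struct_fun (\<lambda>i x. gauge_factor \<sigma> A B g i x *\<^sub>R D i x) i k k x * (A x * g i x - A x * g k x)
        - 2 * vf_apply (\<lambda>x. gauge_factor \<sigma> A B g i x *\<^sub>R D i x)
            (\<lambda>x. \<xi> x + ln (A x) + (g 1 x + g 2 x + g 3 x) * ln (B x)) x * (A x * g i x)"
      if "cyclic i j k" for i j k x
      by (rule gauge_E2[OF MC A B \<sigma> that])
  qed
qed

lemma struct_fun_gauge_231:
  fixes g :: "nat \<Rightarrow> pt \<Rightarrow> real"
  assumes MC: "MC_pre g D \<xi>" and A: "smooth A" "\<forall>y. A y > 0" and B: "smooth B" "\<forall>y. B y > 0"
    and \<sigma>: "\<sigma> \<noteq> 0"
  shows "struct_fun (\<lambda>i x. gauge_factor \<sigma> A B g i x *\<^sub>R D i x) 2 3 1 x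
    = \<sigma> * A x * B x powr (2 * g 1 x) * struct_fun D 2 3 1 x"
proof -
  have frame: "is_frame D" and g_smooth: "\<forall>l\<in>{1,2,3}. smooth (g l)"
    using MC unfolding MC_pre_def by auto
  have f_smooth: "smooth (gauge_factor \<sigma> A B g l)" for l
    using smooth_gauge_factor g_smooth A B by blast
  have f_nonzero: "gauge_factor \<sigma> A B g l y \<noteq> 0" for l y
    using gauge_factor_nonzero \<sigma> A(2) B(2) by blast
  have cyc: "cyclic 1 2 3" "cyclic 2 3 1" "cyclic 3 1 2"
    by (simp_all add: cyclic_def)
  have sums: "(\<Sum>l\<in>{1,2,3} - {1}. g l x) = g 2 x + g 3 x"
    "(\<Sum>l\<in>{1,2,3} - {2}. g l x) = g 3 x + g 1 x"
    "(\<Sum>l\<in>{1,2,3} - {3}. g l x) = g 1 x + g 2 x"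
    by (rule cyclic_sum_others[OF cyc(1)] cyclic_sum_others[OF cyc(2)] cyclic_sum_others[OF cyc(3)])+
  have "struct_fun (\<lambda>i x. gauge_factor \<sigma> A B g i x *\<^sub>R D i x) 2 3 1 x
      = gauge_factor \<sigma> A B g 2 x * gauge_factor \<sigma> A B g 3 x / gauge_factor \<sigma> A B g 1 x
        * struct_fun D 2 3 1 x"
    using struct_fun_rescale[OF frame f_smooth f_nonzero, where j=2 and k=3 and l=1 and x=x] by simp
  also have "gauge_factor \<sigma> A B g 2 x * gauge_factor \<sigma> A B g 3 x / gauge_factor \<sigma> A B g 1 x
      = \<sigma> * A x * (B x powr (g 3 x + g 1 x) * B x powr (g 1 x + g 2 x) / B x powr (g 2 x + g 3 x))"
    unfolding sums using \<sigma> A(2)[rule_format, of x] by (simp add: field_simps)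
  also have "B x powr (g 3 x + g 1 x) * B x powr (g 1 x + g 2 x) / B x powr (g 2 x + g 3 x)
      = B x powr (2 * g 1 x)"
    by (simp add: powr_add[symmetric] powr_diff[symmetric])
  finally show ?thesis
    by simp
qed

section \<open>Normalization\<close>

lemma sgn_constant_on_connected:
  fixes c :: "'a::topological_space \<Rightarrow> real"
  assumes "connected S" "continuous_on S c" "\<forall>x\<in>S. c x \<noteq> 0" "x \<in> S" "y \<in> S"
  shows "sgn (c x) = sgn (c y)"
proof (rule ccontr)
  assume "sgn (c x) \<noteq> sgn (c y)"
  then obtain a b where "a \<in> S" "b \<in> S" "c a < 0" "0 < c b"
    using assms(3-5) by (metis linorder_neqE_linordered_idom sgn_neg sgn_pos)
  moreover have "connected (c ` S)"
    using connected_continuous_image assms(1,2) by blast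
  ultimately have "0 \<in> c ` S"
    unfolding connected_iff_interval by (meson image_eqI less_imp_le)
  with assms(3) show False
    by auto
qed

lemma E1_normal_shape:
  fixes g1 g2 g3 a :: real
  assumes "g1 > 0" "g2 < 0" "g3 < 0" "g2 * g3 + g3 * g1 + g1 * g2 = 0" "a * g1 = 1 / 2"
  shows "-1 - 2 * a * g2 > 0" "a * g3 = (-1 - 1 / (-1 - 2 * a * g2)) / 2"
proof -
  have g3_eq: "g3 * (g1 + g2) = - (g1 * g2)"
    using assms(4) by (simp add: algebra_simps)
  moreover have "g1 * g2 < 0"
    using assms(1,2) by (simp add: mult_pos_neg)
  ultimately have "g1 + g2 < 0"
    using assms(3) by (smt (verit) mult_nonpos_nonneg)
  have a: "a = 1 / (2 * g1)"
    using assms(1,5) by (simp add: field_simps)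
  show "-1 - 2 * a * g2 > 0"
    using \<open>g1 + g2 < 0\<close> assms(1) unfolding a by (simp add: field_simps)
  show "a * g3 = (-1 - 1 / (-1 - 2 * a * g2)) / 2"
    using g3_eq \<open>g1 + g2 < 0\<close> assms(1) unfolding a by (simp add: field_simps)
qed

lemma gauge_equation_iff:
  fixes \<sigma> a b e c :: real
  assumes \<sigma>: "\<sigma> \<in> {-1, 1}" and "a > 0" "b > 0" "e \<noteq> 0" "c \<noteq> 0"
  shows "\<sigma> * a * b powr e * c = -2 \<longleftrightarrow> \<sigma> = - sgn c \<and> b = (2 / (a * \<bar>c\<bar>)) powr (1 / e)"
proof
  assume eq: "\<sigma> * a * b powr e * c = -2"
  have pos: "a * b powr e > 0"
    using assms(2,3) by simp
  have "\<sigma> * c = -2 / (a * b powr e)"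
    using eq assms(2,3) by (simp add: field_simps)
  with pos have "\<sigma> * c < 0"
    by simp
  with \<sigma> have \<sigma>_eq: "\<sigma> = - sgn c"
    by (auto simp: sgn_if)
  then have "b powr e * (a * \<bar>c\<bar>) = 2"
    using eq by (simp add: abs_sgn mult_ac)
  then have "b powr e = 2 / (a * \<bar>c\<bar>)"
    using assms(2,5) by (simp add: field_simps)
  then have "(2 / (a * \<bar>c\<bar>)) powr (1 / e) = (b powr e) powr (1 / e)"
    by simp
  also have "\<dots> = b"
    using assms(3,4) by (simp add: powr_powr)
  finally have "(2 / (a * \<bar>c\<bar>)) powr (1 / e) = b" .
  with \<sigma>_eq show "\<sigma> = - sgn c \<and> b = (2 / (a * \<bar>c\<bar>)) powr (1 / e)"
    by simp
next
  assume sol: "\<sigma> = - sgn c \<and> b = (2 / (a * \<bar>c\<bar>)) powr (1 / e)"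
  have "b powr e = 2 / (a * \<bar>c\<bar>)"
    using sol assms(2,4,5) by (simp add: powr_powr)
  with sol assms(2,5) show "\<sigma> * a * b powr e * c = -2"
    by (simp add: abs_sgn sgn_0_0 field_simps)
qed

locale MC_pre_normalizable =
  fixes g :: "nat \<Rightarrow> pt \<Rightarrow> real" and D :: "nat \<Rightarrow> pt \<Rightarrow> pt" and \<xi> :: "pt \<Rightarrow> real"
  assumes MC_pre: "MC_pre g D \<xi>"
    and g1_pos: "g 1 x > 0" and g2_neg: "g 2 x < 0" and g3_neg: "g 3 x < 0"
    and struct_231_nonzero: "struct_fun D 2 3 1 x \<noteq> 0"
begin

lemma MC_normal_gauge_iff:
  assumes A: "smooth A" "\<forall>y. A y > 0" and B: "smooth B" "\<forall>y. B y > 0" and \<sigma>: "\<sigma> \<noteq> 0"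
  shows "MC_normal (\<lambda>i x. A x * g i x) (\<lambda>i x. gauge_factor \<sigma> A B g i x *\<^sub>R D i x)
      (\<lambda>x. \<xi> x + ln (A x) + (g 1 x + g 2 x + g 3 x) * ln (B x))
    \<longleftrightarrow> (\<forall>x. A x * g 1 x = 1 / 2)
      \<and> (\<forall>x. \<sigma> * A x * B x powr (2 * g 1 x) * struct_fun D 2 3 1 x = -2)"
proof -
  have E1: "g 2 x * g 3 x + g 3 x * g 1 x + g 1 x * g 2 x = 0" for x
    using MC_pre unfolding MC_pre_def by auto
  have "smooth (g 2)"
    using MC_pre unfolding MC_pre_def by auto
  have shape: "(\<exists>u. smooth u \<and> (\<forall>x. u x > 0) \<and> (\<forall>x. A x * g 1 x = 1 / 2
        \<and> A x * g 2 x = (-1 - u x) / 2 \<and> A x * g 3 x = (-1 - 1 / u x) / 2))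
      \<longleftrightarrow> (\<forall>x. A x * g 1 x = 1 / 2)"
  proof
    assume normal: "\<forall>x. A x * g 1 x = 1 / 2"
    let ?u = "\<lambda>x. -1 - 2 * A x * g 2 x"
    have "smooth ?u"
      using A(1) \<open>smooth (g 2)\<close> by (intro smooth_diff smooth_mult) auto
    moreover have "?u x > 0" "A x * g 3 x = (-1 - 1 / ?u x) / 2" for x
      using E1_normal_shape[OF g1_pos g2_neg g3_neg E1 normal[rule_format]] by auto
    ultimately show "\<exists>u. smooth u \<and> (\<forall>x. u x > 0) \<and> (\<forall>x. A x * g 1 x = 1 / 2
        \<and> A x * g 2 x = (-1 - u x) / 2 \<and> A x * g 3 x = (-1 - 1 / u x) / 2)"
      using normal by (intro exI[of _ ?u]) auto
  qed auto
  show ?thesis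
    unfolding MC_normal_def shape struct_fun_gauge_231[OF MC_pre A B \<sigma>]
    using MC_pre_gauge[OF MC_pre A B \<sigma>] by simp
qed

lemma is_frame_D: "is_frame D"
  using MC_pre unfolding MC_pre_def by auto

lemma smooth_struct_231: "smooth (struct_fun D 2 3 1)"
  by (rule smooth_struct_fun[OF is_frame_D]) auto

lemma sgn_struct_231: "sgn (struct_fun D 2 3 1 x) = sgn (struct_fun D 2 3 1 y)"
  using sgn_constant_on_connected[OF connected_UNIV smooth_continuous_on[OF smooth_struct_231]]
    struct_231_nonzero by auto

definition normal_A :: "pt \<Rightarrow> real" where
  "normal_A x = 1 / (2 * g 1 x)"

text \<open>The base point 0 is arbitrary: by sgn_struct_231 the sign of the structure function is the
  same everywhere.\<close>
definition normal_sign :: real where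
  "normal_sign = - sgn (struct_fun D 2 3 1 0)"

text \<open>The solution of B^(2 g_1) = 2 / (normal_A |c^1_23|); its exponent 1 / (2 g_1) is normal_A.\<close>
definition normal_B :: "pt \<Rightarrow> real" where
  "normal_B x = (2 / (normal_A x * \<bar>struct_fun D 2 3 1 x\<bar>)) powr normal_A x"

lemma normal_sign_cases: "normal_sign \<in> {-1, 1}"
  using struct_231_nonzero by (auto simp: normal_sign_def sgn_if)

lemma abs_struct_231: "\<bar>struct_fun D 2 3 1 x\<bar> = - normal_sign * struct_fun D 2 3 1 x"
  using sgn_struct_231[of x 0] by (simp add: normal_sign_def abs_sgn mult.commute)

lemma normal_A_pos: "normal_A x > 0"
  using g1_pos by (simp add: normal_A_def)

lemma smooth_normal_A: "smooth normal_A"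
proof -
  have "smooth (g 1)"
    using MC_pre unfolding MC_pre_def by auto
  then show ?thesis
    unfolding normal_A_def[abs_def] using g1_pos
    by (intro smooth_divide smooth_mult) (auto simp: less_imp_neq[symmetric])
qed

lemma normal_B_pos: "normal_B x > 0"
proof -
  have "2 / (normal_A x * \<bar>struct_fun D 2 3 1 x\<bar>) > 0"
    using normal_A_pos struct_231_nonzero by simp
  then show ?thesis
    unfolding normal_B_def by (metis powr_gt_zero less_irrefl)
qed

lemma smooth_normal_B: "smooth normal_B"
proof -
  have "smooth (\<lambda>x. normal_A x * \<bar>struct_fun D 2 3 1 x\<bar>)"
    unfolding abs_struct_231 using smooth_normal_A smooth_struct_231
    by (intro smooth_mult smooth_const)
  moreover have "\<forall>x. normal_A x * \<bar>struct_fun D 2 3 1 x\<bar> \<noteq> 0"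
    using normal_A_pos struct_231_nonzero by (simp add: less_imp_neq[symmetric])
  ultimately have "smooth (\<lambda>x. 2 / (normal_A x * \<bar>struct_fun D 2 3 1 x\<bar>))"
    by (intro smooth_divide smooth_const)
  then show ?thesis
    unfolding normal_B_def[abs_def] using smooth_normal_A normal_A_pos struct_231_nonzero
    by (intro smooth_powr) auto
qed

lemma MC_normal_gauge_iff_normal:
  assumes "smooth A" "\<forall>x. A x > 0" "smooth B" "\<forall>x. B x > 0" "\<sigma> \<in> {-1, 1}"
  shows "MC_normal (\<lambda>i x. A x * g i x) (\<lambda>i x. gauge_factor \<sigma> A B g i x *\<^sub>R D i x)
      (\<lambda>x. \<xi> x + ln (A x) + (g 1 x + g 2 x + g 3 x) * ln (B x))
    \<longleftrightarrow> A = normal_A \<and> B = normal_B \<and> \<sigma> = normal_sign"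
proof -
  have "A x * g 1 x = 1 / 2 \<longleftrightarrow> A x = normal_A x" for x
    using g1_pos[of x] by (auto simp: normal_A_def field_simps)
  moreover have "\<sigma> * normal_A x * B x powr (2 * g 1 x) * struct_fun D 2 3 1 x = -2
      \<longleftrightarrow> \<sigma> = normal_sign \<and> B x = normal_B x" for x
    using gauge_equation_iff[OF assms(5) normal_A_pos, of "B x" "2 * g 1 x" "struct_fun D 2 3 1 x"]
      assms(4) g1_pos[of x] struct_231_nonzero[of x] sgn_struct_231[of x 0]
    by (simp add: normal_sign_def normal_B_def normal_A_def)
  moreover have "\<sigma> \<noteq> 0"
    using assms(5) by auto
  ultimately show ?thesis
    using MC_normal_gauge_iff[OF assms(1-4)] by (auto simp: fun_eq_iff)
qed

definition normalizing_gauge :: "(pt \<Rightarrow> real) \<Rightarrow> (pt \<Rightarrow> real) \<Rightarrow> real \<Rightarrow> bool" where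
  "normalizing_gauge A B \<sigma> \<longleftrightarrow> smooth A \<and> smooth B \<and> (\<forall>x. A x > 0) \<and> (\<forall>x. B x > 0) \<and> \<sigma> \<in> {-1, 1}
    \<and> MC_normal (\<lambda>i x. A x * g i x) (\<lambda>i x. gauge_factor \<sigma> A B g i x *\<^sub>R D i x)
      (\<lambda>x. \<xi> x + ln (A x) + (g 1 x + g 2 x + g 3 x) * ln (B x))"

lemma normalizing_gauge_iff:
  "normalizing_gauge A B \<sigma> \<longleftrightarrow> (A, B, \<sigma>) = (normal_A, normal_B, normal_sign)"
  using MC_normal_gauge_iff_normal[of A B \<sigma>] smooth_normal_A normal_A_pos smooth_normal_B
    normal_B_pos normal_sign_cases
  unfolding normalizing_gauge_def by blast

end

theorem lemma6p8:
  fixes g :: "nat \<Rightarrow> pt \<Rightarrow> real" and D :: "nat \<Rightarrow> pt \<Rightarrow> pt" and \<xi> :: "pt \<Rightarrow> real"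
  assumes "MC_pre g D \<xi>"
    and "\<forall>x. g 1 x > 0" and "\<forall>x. g 2 x < 0" and "\<forall>x. g 3 x < 0"
    and "\<forall>x. struct_fun D 2 3 1 x \<noteq> 0"
  shows "\<exists>!(A, B, \<sigma>). smooth A \<and> smooth B \<and> (\<forall>x. A x > 0) \<and> (\<forall>x. B x > 0) \<and>
           \<sigma> \<in> {-1, 1::real} \<and>
           MC_normal (\<lambda>i x. A x * g i x)
             (\<lambda>i x. (\<sigma> * A x * B x powr (\<Sum>l\<in>{1,2,3} - {i}. g l x)) *\<^sub>R D i x)
             (\<lambda>x. \<xi> x + ln (A x) + (g 1 x + g 2 x + g 3 x) * ln (B x))"
proof -
  interpret MC_pre_normalizable g D \<xi>
    using assms by unfold_locales auto
  have "\<exists>!(A, B, \<sigma>). normalizing_gauge A B \<sigma>"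
    by (intro ex1I[of _ "(normal_A, normal_B, normal_sign)"])
      (simp_all add: normalizing_gauge_iff split_paired_all)
  then show ?thesis
    unfolding normalizing_gauge_def .
qed

end
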